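(* In the standard LLP setup, for every $N\ge1$: $K^\uparrow\neq\emptyset$ if and only if $L(G,\gamma^N_{cons})\subseteq\overline{K^\uparrow}$.
   Context: Standard LLP setup. $\Sigma=\Sigma_c\,\dot\cup\,\Sigma_{uc}$ is a finite alphabet partitioned into controllable and uncontrollable events. The plant $G$ has generated language $L(G)$ and marked language $L_m(G)$ with $L(G)=\overline{L_m(G)}$ ($\overline{M}$ = set of prefixes of strings in $M$). The legal language $K\subseteq L_m(G)$ satisfies $K=\overline{K}\cap L_m(G)$. For a prefix-closed $L$, $M$ is controllable w.r.t. $L$ if $\overline{M}\Sigma_{uc}\cap L\subseteq\overline{M}$; $K^\uparrow$ is the supremal sublanguage of $K$ controllable w.r.t. $L(G)$. For a language $L$ and $s\in\Sigma^*$: $L/s=\{t: st\in L\}$; $L|_N=\{t\in L:|t|\le N\}$; $\Sigma_{L(G)}(s)=\{\sigma\in\Sigma: s\sigma\in L(G)\}$. $M^{\uparrow/s|_N}$ is the supremal sublanguage of $M$ controllable w.r.t. $L(G)/s|_N$. Conservative attitude: $f^N_{cons}(s)=[K/s|_{N-1}]^{\uparrow/s|_N}$; control policy $\gamma^N_{cons}(s)=(\overline{f^N_{cons}(s)}\cap\Sigma)\cup(\Sigma_{uc}\cap\Sigma_{L(G)}(s))$. Closed-loop language $L(G,\gamma)$: $\epsilon\in L(G,\gamma)$, and $s\sigma\in L(G,\gamma)$ iff $s\in L(G,\gamma)$, $s\sigma\in L(G)$, $\sigma\in\gamma(s)$. *)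

theory Defs
  imports Main
begin

definition pre :: "'a list set \<Rightarrow> 'a list set" where
  "pre M = {s. \<exists>t. s @ t \<in> M}"

definition controllable :: "'a list set \<Rightarrow> 'a list set \<Rightarrow> 'a set \<Rightarrow> bool" where
  "controllable M L Sigma_uc \<longleftrightarrow>
     (\<forall>s \<in> pre M. \<forall>\<sigma> \<in> Sigma_uc. s @ [\<sigma>] \<in> L \<longrightarrow> s @ [\<sigma>] \<in> pre M)"

definition supcon :: "'a list set \<Rightarrow> 'a list set \<Rightarrow> 'a set \<Rightarrow> 'a list set" where
  "supcon M L Sigma_uc = \<Union> {M'. M' \<subseteq> M \<and> controllable M' L Sigma_uc}"

definition quot :: "'a list set \<Rightarrow> 'a list \<Rightarrow> 'a list set" where
  "quot L s = {t. s @ t \<in> L}"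

definition trunc :: "'a list set \<Rightarrow> nat \<Rightarrow> 'a list set" where
  "trunc L N = {t \<in> L. length t \<le> N}"

definition active :: "'a set \<Rightarrow> 'a list set \<Rightarrow> 'a list \<Rightarrow> 'a set" where
  "active Sig L s = {\<sigma> \<in> Sig. s @ [\<sigma>] \<in> L}"

definition f_cons :: "'a list set \<Rightarrow> 'a list set \<Rightarrow> 'a set \<Rightarrow> nat \<Rightarrow> 'a list \<Rightarrow> 'a list set" where
  "f_cons L K Sigma_uc N s = supcon (trunc (quot K s) (N - 1)) (trunc (quot L s) N) Sigma_uc"

text \<open>gamma^N_cons(s) = (pre(f^N_cons(s)) \<inter> Sig) \<union> (Sigma_uc \<inter> Sigma_L(s)),
  where strings of length one are identified with events.\<close>
definition gamma_cons :: "'a set \<Rightarrow> 'a list set \<Rightarrow> 'a list set \<Rightarrow> 'a set \<Rightarrow> nat \<Rightarrow> 'a list \<Rightarrow> 'a set" where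
  "gamma_cons Sig L K Sigma_uc N s =
     {\<sigma> \<in> Sig. [\<sigma>] \<in> pre (f_cons L K Sigma_uc N s)} \<union> (Sigma_uc \<inter> active Sig L s)"

inductive_set closed_loop :: "'a list set \<Rightarrow> ('a list \<Rightarrow> 'a set) \<Rightarrow> 'a list set"
  for L :: "'a list set" and \<gamma> :: "'a list \<Rightarrow> 'a set" where
  Nil: "[] \<in> closed_loop L \<gamma>"
| snoc: "s \<in> closed_loop L \<gamma> \<Longrightarrow> s @ [\<sigma>] \<in> L \<Longrightarrow> \<sigma> \<in> \<gamma> s \<Longrightarrow> s @ [\<sigma>] \<in> closed_loop L \<gamma>"

end

theory Submission
  imports Defs
begin

text \<open>Every string of the closed loop stays in \<open>pre (K\<up>)\<close>, by induction along the loop.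
  Uncontrollable steps are covered by controllability of \<open>K\<up>\<close>. A controllable event
  \<open>\<sigma>\<close> is enabled after \<open>s\<close> only if it begins a string \<open>t\<close> of the local supervisor
  \<open>M = f_cons(s)\<close>. All strings of \<open>M\<close> are shorter than the horizon \<open>N\<close>, so controllability
  of \<open>M\<close> w.r.t. \<open>L(G)/s|\<^sub>N\<close> makes \<open>K\<up> \<union> s M\<close> a controllable sublanguage of \<open>K\<close>;
  by supremality \<open>s t \<in> K\<up>\<close>. Conversely the empty string is in the closed loop, and it is
  a prefix of \<open>K\<up>\<close> only if \<open>K\<up> \<noteq> {}\<close>.\<close>

lemma pre_Union: "pre (\<Union>S) = (\<Union>A\<in>S. pre A)"
  unfolding pre_def by blast

lemma pre_Un: "pre (A \<union> B) = pre A \<union> pre B"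
  unfolding pre_def by blast

lemma pre_appendD:
  assumes "x @ y \<in> pre A"
  shows "x \<in> pre A"
proof -
  from assms obtain t where "x @ (y @ t) \<in> A"
    unfolding pre_def by auto
  then show ?thesis
    unfolding pre_def by blast
qed

lemma subset_pre: "A \<subseteq> pre A"
proof
  fix s assume "s \<in> A"
  then have "s @ [] \<in> A"
    by simp
  then show "s \<in> pre A"
    unfolding pre_def by blast
qed

lemma pre_eq_empty_iff: "pre A = {} \<longleftrightarrow> A = {}"
  using subset_pre[of A] unfolding pre_def by blast

lemma pre_image_append_cases:
  assumes "x \<in> pre ((@) s ` M)"
  obtains u where "x @ u = s" | u where "u \<in> pre M" "x = s @ u"
proof -
  from assms obtain v m where "m \<in> M" "x @ v = s @ m"
    unfolding pre_def by auto
  then show ?thesis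
    using that unfolding append_eq_append_conv2 pre_def by blast
qed

lemma controllable_Union:
  assumes "\<And>M. M \<in> S \<Longrightarrow> controllable M L U"
  shows "controllable (\<Union>S) L U"
  using assms unfolding controllable_def pre_Union by blast

lemma supcon_subset: "supcon M L U \<subseteq> M"
  unfolding supcon_def by blast

lemma supcon_controllable: "controllable (supcon M L U) L U"
  unfolding supcon_def by (rule controllable_Union) blast

lemma supcon_greatest: "M' \<subseteq> M \<Longrightarrow> controllable M' L U \<Longrightarrow> M' \<subseteq> supcon M L U"
  unfolding supcon_def by blast

lemma controllable_within_horizon:
  assumes "controllable M (trunc (quot L s) n) U"
    and "\<And>t. t \<in> M \<Longrightarrow> length t < n"
    and "u \<in> pre M" "\<sigma> \<in> U" "s @ u @ [\<sigma>] \<in> L"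
  shows "u @ [\<sigma>] \<in> pre M"
proof -
  from \<open>u \<in> pre M\<close> obtain v where "u @ v \<in> M"
    unfolding pre_def by blast
  with assms(2) have "length (u @ [\<sigma>]) \<le> n"
    by fastforce
  with \<open>s @ u @ [\<sigma>] \<in> L\<close> have "u @ [\<sigma>] \<in> trunc (quot L s) n"
    unfolding trunc_def quot_def by simp
  with assms(1,3,4) show ?thesis
    unfolding controllable_def by blast
qed

lemma append_image_subset_supcon:
  assumes s: "s \<in> pre (supcon K L U)"
    and M: "M \<subseteq> quot K s" "\<And>t. t \<in> M \<Longrightarrow> length t < n"
    and M_ctrl: "controllable M (trunc (quot L s) n) U"
  shows "(@) s ` M \<subseteq> supcon K L U"
proof -
  let ?C = "supcon K L U"
  let ?D = "?C \<union> (@) s ` M"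
  have "controllable ?D L U"
    unfolding controllable_def
  proof (intro ballI impI)
    fix x \<tau> assume x: "x \<in> pre ?D" and \<tau>: "\<tau> \<in> U" and x\<tau>: "x @ [\<tau>] \<in> L"
    have C_closed: "x @ [\<tau>] \<in> pre ?C" if "x \<in> pre ?C"
      using that supcon_controllable \<tau> x\<tau> unfolding controllable_def by blast
    from x have "x \<in> pre ?C \<or> x \<in> pre ((@) s ` M)"
      by (simp add: pre_Un)
    then show "x @ [\<tau>] \<in> pre ?D"
    proof
      assume "x \<in> pre ?C"
      then show ?thesis
        using C_closed by (simp add: pre_Un)
    next
      assume "x \<in> pre ((@) s ` M)"
      then show ?thesis
      proof (cases rule: pre_image_append_cases)
        case (1 u)
        with s have "x \<in> pre ?C"
          by (blast intro: pre_appendD)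
        then show ?thesis
          using C_closed by (simp add: pre_Un)
      next
        case (2 u)
        with \<tau> x\<tau> have "u @ [\<tau>] \<in> pre M"
          by (intro controllable_within_horizon[OF M_ctrl M(2)]) simp_all
        then have "x @ [\<tau>] \<in> pre ((@) s ` M)"
          using \<open>x = s @ u\<close> unfolding pre_def by auto
        then show ?thesis
          by (simp add: pre_Un)
      qed
    qed
  qed
  moreover have "?D \<subseteq> K"
    using supcon_subset M(1) unfolding quot_def by blast
  ultimately show ?thesis
    using supcon_greatest by blast
qed

lemma f_cons_append_subset_supcon:
  assumes "N \<ge> 1" "s \<in> pre (supcon K L U)"
  shows "(@) s ` f_cons L K U N s \<subseteq> supcon K L U"
proof -
  have horizon: "f_cons L K U N s \<subseteq> trunc (quot K s) (N - 1)"
    unfolding f_cons_def by (rule supcon_subset)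
  show ?thesis
  proof (rule append_image_subset_supcon[OF assms(2)])
    show "f_cons L K U N s \<subseteq> quot K s"
      using horizon unfolding trunc_def by blast
    show "length t < N" if "t \<in> f_cons L K U N s" for t
      using that horizon \<open>N \<ge> 1\<close> unfolding trunc_def by auto
    show "controllable (f_cons L K U N s) (trunc (quot L s) N) U"
      unfolding f_cons_def by (rule supcon_controllable)
  qed
qed

lemma gamma_cons_step_in_pre_supcon:
  assumes "N \<ge> 1" "s \<in> pre (supcon K L U)"
    and "\<sigma> \<in> gamma_cons Sig L K U N s" "s @ [\<sigma>] \<in> L"
  shows "s @ [\<sigma>] \<in> pre (supcon K L U)"
proof -
  from assms(3) consider "[\<sigma>] \<in> pre (f_cons L K U N s)" | "\<sigma> \<in> U"
    unfolding gamma_cons_def by blast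
  then show ?thesis
  proof cases
    case 1
    then obtain t where "\<sigma> # t \<in> f_cons L K U N s"
      unfolding pre_def by auto
    with f_cons_append_subset_supcon[OF assms(1,2)] have "(s @ [\<sigma>]) @ t \<in> supcon K L U"
      by auto
    then show ?thesis
      unfolding pre_def by blast
  next
    case 2
    with assms(2,4) show ?thesis
      using supcon_controllable unfolding controllable_def by blast
  qed
qed

lemma closed_loop_gamma_cons_subset_pre_supcon:
  assumes "N \<ge> 1" "supcon K L U \<noteq> {}"
  shows "closed_loop L (gamma_cons Sig L K U N) \<subseteq> pre (supcon K L U)"
proof
  fix x assume "x \<in> closed_loop L (gamma_cons Sig L K U N)"
  then show "x \<in> pre (supcon K L U)"
  proof induction
    case Nil
    from assms(2) show ?case
      unfolding pre_def by auto
  next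
    case (snoc s \<sigma>)
    then show ?case
      by (intro gamma_cons_step_in_pre_supcon[OF assms(1)])
  qed
qed

theorem theorem4:
  fixes Sig Sig_c Sig_uc :: "'a set"
    and Lm L K :: "'a list set"
    and N :: nat
  assumes "finite Sig"
    and "Sig = Sig_c \<union> Sig_uc" and "Sig_c \<inter> Sig_uc = {}"
    and "Lm \<subseteq> lists Sig"
    and "L = pre Lm"
    and "K \<subseteq> Lm" and "K = pre K \<inter> Lm"
    and "N \<ge> 1"
  shows "supcon K L Sig_uc \<noteq> {} \<longleftrightarrow>
    closed_loop L (gamma_cons Sig L K Sig_uc N) \<subseteq> pre (supcon K L Sig_uc)"
proof
  assume "supcon K L Sig_uc \<noteq> {}"
  with \<open>N \<ge> 1\<close> show "closed_loop L (gamma_cons Sig L K Sig_uc N) \<subseteq> pre (supcon K L Sig_uc)"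
    by (rule closed_loop_gamma_cons_subset_pre_supcon)
next
  assume "closed_loop L (gamma_cons Sig L K Sig_uc N) \<subseteq> pre (supcon K L Sig_uc)"
  with closed_loop.Nil have "pre (supcon K L Sig_uc) \<noteq> {}"
    by blast
  then show "supcon K L Sig_uc \<noteq> {}"
    by (simp add: pre_eq_empty_iff)
qed

end
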